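(* Let $(B,+,\circ)$ be a left brace with Yang–Baxter map $r$ and let $c\in B$ be central in $(B,\circ)$. Then the map (1) $k_{1,n}(x)=c\circ x-c+n\,x$, for each $n\in\mathbb Z$, is $\mathcal G(B,r)$-equivariant. If moreover $2\,(c\circ b)=2b+2c$ for all $b\in B$, then the following maps $B\to B$ are also $\mathcal G(B,r)$-equivariant: (2) $k_{2,n}(x)=c\circ x+c+n\,x$, for each $n\in\mathbb Z$; (3) $\widetilde k_m(x)=c^{2m}\circ x+c^{2m}+2\sum_{j=1}^{m-1}c^{2j}-2\sum_{j=1}^{m}c^{2j-1}$, for each integer $m\ge1$; (4) $\widehat k_m(x)=c^{2m}\circ x-c^{2m}-2\sum_{j=1}^{m-1}c^{2j}+2\sum_{j=1}^{m}c^{2j-1}$, for each integer $m\ge1$; (5) $l_{m,n}(x)=2m\,c+(2m+n)\,x$, for each integer $m\ge1$ and $n\in\mathbb Z$.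
   Context: A (left) brace is a triple $(B,+,\circ)$ such that $(B,+)$ is an abelian group with identity $0$, $(B,\circ)$ is a group, and $x\circ(y+z)=x\circ y+x\circ z-x$ for all $x,y,z\in B$. The Yang–Baxter map is $r(x,y)=(\sigma_x(y),\tau_y(x))$ with $\sigma_x(y)=x\circ y-x$ and $\tau_y(x)=(\sigma_x(y))^{-1}\circ x-(\sigma_x(y))^{-1}$. A map $k:B\to B$ is $\mathcal G(B,r)$-equivariant if $k\sigma_x=\sigma_x k$ for all $x\in B$. Powers $c^j$ are taken in the group $(B,\circ)$; $n\,x$ for $n\in\mathbb Z$ denotes the $n$-th multiple in $(B,+)$; empty sums are $0$. *)

theory Defs
  imports "HOL-Algebra.Group"
begin

definition circ_grp :: "('a \<Rightarrow> 'a \<Rightarrow> 'a) \<Rightarrow> 'a monoid" where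
  "circ_grp circ = \<lparr>carrier = UNIV, mult = circ,
      one = (THE e. group \<lparr>carrier = UNIV, mult = circ, one = e\<rparr>)\<rparr>"

definition is_brace :: "('a::ab_group_add \<Rightarrow> 'a \<Rightarrow> 'a) \<Rightarrow> bool" where
  "is_brace circ \<longleftrightarrow>
     (\<exists>e. group \<lparr>carrier = UNIV, mult = circ, one = e\<rparr>) \<and>
     (\<forall>x y z. circ x (y + z) = circ x y + circ x z - x)"

definition brace_inv :: "('a \<Rightarrow> 'a \<Rightarrow> 'a) \<Rightarrow> 'a \<Rightarrow> 'a" where
  "brace_inv circ x = inv\<^bsub>circ_grp circ\<^esub> x"

definition brace_pow :: "('a \<Rightarrow> 'a \<Rightarrow> 'a) \<Rightarrow> 'a \<Rightarrow> nat \<Rightarrow> 'a" where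
  "brace_pow circ x j = x [^]\<^bsub>circ_grp circ\<^esub> j"

definition sigma :: "('a::ab_group_add \<Rightarrow> 'a \<Rightarrow> 'a) \<Rightarrow> 'a \<Rightarrow> 'a \<Rightarrow> 'a" where
  "sigma circ x y = circ x y - x"

definition tau :: "('a::ab_group_add \<Rightarrow> 'a \<Rightarrow> 'a) \<Rightarrow> 'a \<Rightarrow> 'a \<Rightarrow> 'a" where
  "tau circ y x = circ (brace_inv circ (sigma circ x y)) x - brace_inv circ (sigma circ x y)"

definition ybe_map :: "('a::ab_group_add \<Rightarrow> 'a \<Rightarrow> 'a) \<Rightarrow> 'a \<times> 'a \<Rightarrow> 'a \<times> 'a" where
  "ybe_map circ = (\<lambda>(x, y). (sigma circ x y, tau circ y x))"

text \<open>k is G(B,r)-equivariant: k commutes with every sigma_x.\<close>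
definition equivariant :: "('a::ab_group_add \<Rightarrow> 'a \<Rightarrow> 'a) \<Rightarrow> ('a \<Rightarrow> 'a) \<Rightarrow> bool" where
  "equivariant circ k \<longleftrightarrow> (\<forall>x. k \<circ> sigma circ x = sigma circ x \<circ> k)"

definition zsmul :: "int \<Rightarrow> 'a::ab_group_add \<Rightarrow> 'a" where
  "zsmul n x = (if 0 \<le> n then ((+) x ^^ nat n) 0 else - (((+) x ^^ nat (- n)) 0))"

end

theory Submission
  imports Defs "HOL.Modules"
begin

text \<open>Each \<open>\<sigma>\<^sub>x\<close> is an additive endomorphism of \<open>(B,+)\<close> and \<open>\<sigma>\<^sub>x \<sigma>\<^sub>y = \<sigma>\<^bsub>x\<circ>y\<^esub>\<close>, so for
  central \<open>d\<close> the map \<open>\<sigma>\<^sub>d\<close> commutes with every \<open>\<sigma>\<^sub>x\<close>.  Sums of equivariant maps are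
  equivariant, integer multiples are equivariant by additivity, and a constant map is
  equivariant exactly when its value is fixed by all \<open>\<sigma>\<^sub>x\<close>.  Each map of the theorem is
  \<open>\<sigma>\<^sub>d\<close> (with \<open>d\<close> a power of \<open>c\<close>) plus such a constant plus a multiple of the identity.
  The fixed constants come from the doubling condition \<open>2(d\<circ>b) = 2b + 2d\<close>: it is
  inherited by all powers of \<open>c\<close>, and for central \<open>d\<close> it says precisely that
  \<open>\<sigma>\<^sub>y(2d) = 2(d\<circ>y) - 2y = 2d\<close>.\<close>

lemma additive_zsmul: "additive (zsmul n :: 'a::ab_group_add \<Rightarrow> 'a)"
proof
  have iter_add: "((+) (x + y) ^^ k) 0 = ((+) x ^^ k) 0 + ((+) y ^^ k) (0::'a)" for x y k
    by (induction k) (simp_all add: algebra_simps)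
  show "zsmul n (x + y) = zsmul n x + zsmul n y" for x y :: 'a
    unfolding zsmul_def by (simp add: iter_add)
qed

lemma (in additive) zsmul_commute: "f (zsmul n x) = zsmul n (f x)"
proof -
  have "f (((+) x ^^ k) 0) = ((+) (f x) ^^ k) 0" for k
    by (induction k) (simp_all add: zero add)
  then show ?thesis
    unfolding zsmul_def by (simp add: minus)
qed

lemma zsmul_0 [simp]: "zsmul 0 x = 0"
  unfolding zsmul_def by simp

lemma zsmul_2: "zsmul 2 x = x + x"
  unfolding zsmul_def by (simp add: numeral_2_eq_2)

lemma zsmul_even: "zsmul (2 * int m) x = zsmul (int m) (x + x)"
proof -
  have "((+) x ^^ (2 * m)) 0 = ((+) (x + x) ^^ m) 0"
    by (induction m) (simp_all add: algebra_simps)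
  moreover have "nat (2 * int m) = 2 * m"
    by simp
  ultimately show ?thesis
    unfolding zsmul_def by simp
qed

locale left_brace =
  fixes circ :: "'a::ab_group_add \<Rightarrow> 'a \<Rightarrow> 'a"
  assumes is_brace: "is_brace circ"
begin

lemma brace_law: "circ x (y + z) = circ x y + circ x z - x"
  using is_brace unfolding is_brace_def by blast

lemma circ_zero_right [simp]: "circ x 0 = x"
  using brace_law [of x 0 0] by (simp add: algebra_simps)

lemma group_one_eq_zero:
  assumes "group \<lparr>carrier = UNIV, mult = circ, one = e\<rparr>"
  shows "e = 0"
proof -
  have "circ e 0 = 0"
    using monoid.l_one [OF group.is_monoid [OF assms], of 0] by simp
  then show ?thesis
    by simp
qed

lemma circ_grp_eq: "circ_grp circ = \<lparr>carrier = UNIV, mult = circ, one = 0\<rparr>"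
proof -
  obtain e where "group \<lparr>carrier = UNIV, mult = circ, one = e\<rparr>"
    using is_brace unfolding is_brace_def by blast
  then have "group \<lparr>carrier = UNIV, mult = circ, one = 0\<rparr>"
    using group_one_eq_zero by blast
  then have "(THE e. group \<lparr>carrier = UNIV, mult = circ, one = e\<rparr>) = 0"
    using group_one_eq_zero by (rule the_equality)
  then show ?thesis
    unfolding circ_grp_def by simp
qed

lemma circ_assoc: "circ (circ x y) z = circ x (circ y z)"
proof -
  obtain e where "group \<lparr>carrier = UNIV, mult = circ, one = e\<rparr>"
    using is_brace unfolding is_brace_def by blast
  from monoid.m_assoc [OF group.is_monoid [OF this]] show ?thesis
    by simp
qed

lemma circ_zero_left [simp]: "circ 0 x = x"
proof -
  have "group (circ_grp circ)"
    using is_brace group_one_eq_zero unfolding is_brace_def circ_grp_eq by blast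
  from monoid.l_one [OF group.is_monoid [OF this]] show ?thesis
    by (simp add: circ_grp_eq)
qed

lemma brace_pow_0 [simp]: "brace_pow circ c 0 = 0"
  unfolding brace_pow_def by (simp add: circ_grp_eq)

lemma brace_pow_Suc: "brace_pow circ c (Suc k) = circ (brace_pow circ c k) c"
  unfolding brace_pow_def circ_grp_def by simp

lemma brace_pow_closed:
  assumes "P 0" and "\<And>a b. P a \<Longrightarrow> P b \<Longrightarrow> P (circ a b)" and "P c"
  shows "P (brace_pow circ c k)"
  by (induction k) (simp_all add: brace_pow_Suc assms)

lemma additive_sigma: "additive (sigma circ x)"
  by unfold_locales (simp add: sigma_def brace_law algebra_simps)

lemma sigma_circ: "sigma circ a (sigma circ b z) = sigma circ (circ a b) z"
proof -
  have "sigma circ a (sigma circ b z) = sigma circ a (circ b z) - sigma circ a b"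
    unfolding sigma_def [of circ b z] by (rule additive.diff [OF additive_sigma])
  then show ?thesis
    by (simp add: sigma_def circ_assoc)
qed

definition central :: "'a \<Rightarrow> bool" where
  "central d \<longleftrightarrow> (\<forall>b. circ d b = circ b d)"

definition doubling :: "'a \<Rightarrow> bool" where
  "doubling d \<longleftrightarrow> (\<forall>b. zsmul 2 (circ d b) = zsmul 2 b + zsmul 2 d)"

definition fixed_points :: "'a set" where
  "fixed_points = {a. \<forall>y. sigma circ y a = a}"

lemma central_circ:
  assumes a: "central a" and b: "central b"
  shows "central (circ a b)"
  unfolding central_def
proof
  fix x
  have "circ (circ a b) x = circ a (circ x b)"
    using b by (simp add: circ_assoc central_def)
  also have "\<dots> = circ (circ a x) b"
    by (simp add: circ_assoc)
  also have "\<dots> = circ x (circ a b)"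
    using a by (simp add: circ_assoc central_def)
  finally show "circ (circ a b) x = circ x (circ a b)" .
qed

lemma doubling_circ:
  assumes a: "doubling a" and b: "doubling b"
  shows "doubling (circ a b)"
  unfolding doubling_def
proof
  fix x
  have "zsmul 2 (circ (circ a b) x) = zsmul 2 x + zsmul 2 b + zsmul 2 a"
    using a b by (simp add: circ_assoc doubling_def)
  also have "\<dots> = zsmul 2 x + zsmul 2 (circ a b)"
    using a by (simp add: doubling_def add.assoc)
  finally show "zsmul 2 (circ (circ a b) x) = zsmul 2 x + zsmul 2 (circ a b)" .
qed

lemma central_brace_pow: "central c \<Longrightarrow> central (brace_pow circ c k)"
  by (rule brace_pow_closed [where P = central, OF _ central_circ])
    (simp_all add: central_def)

lemma doubling_brace_pow: "doubling c \<Longrightarrow> doubling (brace_pow circ c k)"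
  by (rule brace_pow_closed [where P = doubling, OF _ doubling_circ])
    (simp_all add: doubling_def additive.zero [OF additive_zsmul])

lemma double_mem_fixed_points:
  assumes "central d" and "doubling d"
  shows "zsmul 2 d \<in> fixed_points"
proof -
  have "sigma circ y (zsmul 2 d) = zsmul 2 d" for y
  proof -
    have "sigma circ y (zsmul 2 d) = zsmul 2 (sigma circ y d)"
      by (rule additive.zsmul_commute [OF additive_sigma])
    also have "\<dots> = zsmul 2 (circ y d) - zsmul 2 y"
      by (simp add: sigma_def additive.diff [OF additive_zsmul])
    also have "\<dots> = zsmul 2 d"
      using assms by (simp add: central_def doubling_def)
    finally show ?thesis .
  qed
  then show ?thesis
    by (simp add: fixed_points_def)
qed

lemma zero_mem_fixed_points: "0 \<in> fixed_points"
  by (simp add: fixed_points_def additive.zero [OF additive_sigma])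

lemma fixed_points_add: "a \<in> fixed_points \<Longrightarrow> b \<in> fixed_points \<Longrightarrow> a + b \<in> fixed_points"
  by (simp add: fixed_points_def additive.add [OF additive_sigma])

lemma fixed_points_diff: "a \<in> fixed_points \<Longrightarrow> b \<in> fixed_points \<Longrightarrow> a - b \<in> fixed_points"
  by (simp add: fixed_points_def additive.diff [OF additive_sigma])

lemma fixed_points_sum: "(\<And>j. j \<in> S \<Longrightarrow> f j \<in> fixed_points) \<Longrightarrow> sum f S \<in> fixed_points"
  by (simp add: fixed_points_def additive.sum [OF additive_sigma])

lemma fixed_points_zsmul: "a \<in> fixed_points \<Longrightarrow> zsmul n a \<in> fixed_points"
  by (simp add: fixed_points_def additive.zsmul_commute [OF additive_sigma])

lemma equivariant_add:
  "equivariant circ f \<Longrightarrow> equivariant circ g \<Longrightarrow> equivariant circ (\<lambda>x. f x + g x)"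
  unfolding equivariant_def by (simp add: fun_eq_iff additive.add [OF additive_sigma])

lemma equivariant_const: "a \<in> fixed_points \<Longrightarrow> equivariant circ (\<lambda>_. a)"
  unfolding equivariant_def fixed_points_def by auto

lemma equivariant_zsmul: "equivariant circ (zsmul n)"
  unfolding equivariant_def by (simp add: fun_eq_iff additive.zsmul_commute [OF additive_sigma])

lemma equivariant_sigma: "central d \<Longrightarrow> equivariant circ (sigma circ d)"
  unfolding equivariant_def central_def by (simp add: fun_eq_iff sigma_circ)

lemma equivariant_sigma_affine:
  assumes "central d" and "a \<in> fixed_points"
  shows "equivariant circ (\<lambda>x. sigma circ d x + a + zsmul n x)"
  by (intro equivariant_add equivariant_sigma equivariant_const equivariant_zsmul assms)

lemma double_brace_pow_mem_fixed_points:
  assumes "central c" and "doubling c"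
  shows "zsmul 2 (brace_pow circ c k) \<in> fixed_points"
  by (intro double_mem_fixed_points central_brace_pow doubling_brace_pow assms)

lemma double_sum_brace_pow_mem_fixed_points:
  assumes "central c" and "doubling c"
  shows "zsmul 2 (\<Sum>j\<in>S. brace_pow circ c (g j)) \<in> fixed_points"
  by (simp add: additive.sum [OF additive_zsmul] fixed_points_sum
      double_brace_pow_mem_fixed_points assms)

lemma equivariant_circ_minus:
  assumes "central c"
  shows "equivariant circ (\<lambda>x. circ c x - c + zsmul n x)"
  using equivariant_sigma_affine [OF assms zero_mem_fixed_points, of n] by (simp add: sigma_def)

lemma equivariant_circ_plus:
  assumes "central c" and "doubling c"
  shows "equivariant circ (\<lambda>x. circ c x + c + zsmul n x)"
  using equivariant_sigma_affine [OF assms(1) double_mem_fixed_points [OF assms], of n]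
  by (simp add: sigma_def zsmul_2 algebra_simps)

lemma equivariant_even_power_plus:
  assumes "central c" and "doubling c"
  shows "equivariant circ (\<lambda>x.
      circ (brace_pow circ c (2*m)) x + brace_pow circ c (2*m)
      + zsmul 2 (\<Sum>j\<in>{1..m-1}. brace_pow circ c (2*j))
      - zsmul 2 (\<Sum>j\<in>{1..m}. brace_pow circ c (2*j-1)))"
proof -
  let ?d = "brace_pow circ c (2*m)"
  let ?a = "zsmul 2 ?d + zsmul 2 (\<Sum>j\<in>{1..m-1}. brace_pow circ c (2*j))
    - zsmul 2 (\<Sum>j\<in>{1..m}. brace_pow circ c (2*j-1))"
  have "?a \<in> fixed_points"
    by (intro fixed_points_diff fixed_points_add double_brace_pow_mem_fixed_points
        double_sum_brace_pow_mem_fixed_points assms)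
  from equivariant_sigma_affine [OF central_brace_pow [OF assms(1), of "2*m"] this, where n = 0]
  show ?thesis
    by (simp add: sigma_def zsmul_2 algebra_simps)
qed

lemma equivariant_even_power_minus:
  assumes "central c" and "doubling c"
  shows "equivariant circ (\<lambda>x.
      circ (brace_pow circ c (2*m)) x - brace_pow circ c (2*m)
      - zsmul 2 (\<Sum>j\<in>{1..m-1}. brace_pow circ c (2*j))
      + zsmul 2 (\<Sum>j\<in>{1..m}. brace_pow circ c (2*j-1)))"
proof -
  let ?a = "zsmul 2 (\<Sum>j\<in>{1..m}. brace_pow circ c (2*j-1))
    - zsmul 2 (\<Sum>j\<in>{1..m-1}. brace_pow circ c (2*j))"
  have "?a \<in> fixed_points"
    by (intro fixed_points_diff double_sum_brace_pow_mem_fixed_points assms)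
  from equivariant_sigma_affine [OF central_brace_pow [OF assms(1), of "2*m"] this, where n = 0]
  show ?thesis
    by (simp add: sigma_def zsmul_2 algebra_simps)
qed

lemma equivariant_multiples:
  assumes "central c" and "doubling c"
  shows "equivariant circ (\<lambda>x. zsmul (2 * int m) c + zsmul (2 * int m + n) x)"
  using double_mem_fixed_points [OF assms]
  by (intro equivariant_add equivariant_const equivariant_zsmul)
    (simp add: zsmul_even fixed_points_zsmul flip: zsmul_2)

end

theorem mainTheorem5:
  fixes circ :: "'a::ab_group_add \<Rightarrow> 'a \<Rightarrow> 'a" and c :: 'a
  assumes brace: "is_brace circ"
    and central: "\<forall>b. circ c b = circ b c"
  shows "(\<forall>n::int. equivariant circ (\<lambda>x. circ c x - c + zsmul n x))
    \<and> ((\<forall>b. zsmul 2 (circ c b) = zsmul 2 b + zsmul 2 c) \<longrightarrow>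
        (\<forall>n::int. equivariant circ (\<lambda>x. circ c x + c + zsmul n x))
      \<and> (\<forall>m::nat. m \<ge> 1 \<longrightarrow> equivariant circ (\<lambda>x.
            circ (brace_pow circ c (2*m)) x + brace_pow circ c (2*m)
            + zsmul 2 (\<Sum>j\<in>{1..m-1}. brace_pow circ c (2*j))
            - zsmul 2 (\<Sum>j\<in>{1..m}. brace_pow circ c (2*j-1))))
      \<and> (\<forall>m::nat. m \<ge> 1 \<longrightarrow> equivariant circ (\<lambda>x.
            circ (brace_pow circ c (2*m)) x - brace_pow circ c (2*m)
            - zsmul 2 (\<Sum>j\<in>{1..m-1}. brace_pow circ c (2*j))
            + zsmul 2 (\<Sum>j\<in>{1..m}. brace_pow circ c (2*j-1))))
      \<and> (\<forall>(m::nat) (n::int). m \<ge> 1 \<longrightarrow>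
            equivariant circ (\<lambda>x. zsmul (2 * int m) c + zsmul (2 * int m + n) x)))"
proof -
  interpret left_brace circ
    by (rule left_brace.intro [OF brace])
  have "central c"
    using central by (simp add: central_def)
  then show ?thesis
    unfolding doubling_def [symmetric]
    by (blast intro: equivariant_circ_minus equivariant_circ_plus equivariant_even_power_plus
        equivariant_even_power_minus equivariant_multiples)
qed

end
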